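(* Let $\mathfrak{g}$ be a finite-dimensional complex simple Lie algebra and $j\in I$. For every chamber weight $\gamma\in\Gamma$: - $\gamma\in\Gamma^j$ if and only if $\langle h_j,\gamma\rangle\le0$; - $\gamma\in\Gamma_j$ if and only if $\langle h_j,\gamma\rangle>0$.
   Context: $\mathfrak{g}$ has index set $I$, simple coroots $h_i$ and fundamental weights $\varpi_i$. $W$ is its Weyl group, with simple reflections $s_i$ and Bruhat order $<$. The chamber weights are $\Gamma=\{w\varpi_i:w\in W,i\in I\}$. Let $W_j^-=\{w\in W: s_jw<w\}$, set $\Gamma^j=\{w\varpi_i: w\in W_j^-, i\in I\}$, and set $\Gamma_j=\Gamma\setminus\Gamma^j$. *)

theory Defs
  imports Complex_Main
begin

text \<open>A finite-dimensional complex simple Lie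
algebra is encoded by its Cartan matrix A, with A i j = <h_i, alpha_j>.
Weights are written in the basis of fundamental weights: a weight is a function
lam :: 'i => int, lam = sum_i lam(i) varpi_i, so that <h_i, lam> = lam i.\<close>

definition cartan_simple :: "('i::finite \<Rightarrow> 'i \<Rightarrow> int) \<Rightarrow> bool" where
  "cartan_simple A \<longleftrightarrow>
     (\<forall>i. A i i = 2) \<and>
     (\<forall>i j. i \<noteq> j \<longrightarrow> A i j \<le> 0) \<and>
     (\<forall>i j. A i j = 0 \<longleftrightarrow> A j i = 0) \<and>
     (\<exists>d :: 'i \<Rightarrow> real. (\<forall>i. d i > 0) \<and>
        (\<forall>i j. d i * of_int (A i j) = d j * of_int (A j i)) \<and>
        (\<forall>x :: 'i \<Rightarrow> real. x \<noteq> (\<lambda>_. 0) \<longrightarrow>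
            (\<Sum>i\<in>UNIV. \<Sum>j\<in>UNIV. x i * d i * of_int (A i j) * x j) > 0)) \<and>
     (\<forall>S :: 'i set. S \<noteq> {} \<and> S \<noteq> UNIV \<longrightarrow> (\<exists>i\<in>S. \<exists>j. j \<notin> S \<and> A i j \<noteq> 0))"

definition fund_weight :: "'i \<Rightarrow> ('i \<Rightarrow> int)" where
  "fund_weight i = (\<lambda>k. if k = i then 1 else 0)"

definition simple_root :: "('i \<Rightarrow> 'i \<Rightarrow> int) \<Rightarrow> 'i \<Rightarrow> ('i \<Rightarrow> int)" where
  "simple_root A i = (\<lambda>k. A k i)"

definition sref :: "('i \<Rightarrow> 'i \<Rightarrow> int) \<Rightarrow> 'i \<Rightarrow> ('i \<Rightarrow> int) \<Rightarrow> ('i \<Rightarrow> int)" where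
  "sref A i lam = (\<lambda>k. lam k - lam i * A k i)"

definition word_elt :: "('i \<Rightarrow> 'i \<Rightarrow> int) \<Rightarrow> 'i list \<Rightarrow> (('i \<Rightarrow> int) \<Rightarrow> ('i \<Rightarrow> int))" where
  "word_elt A xs = foldr (\<lambda>i f. sref A i \<circ> f) xs id"

definition weyl :: "('i \<Rightarrow> 'i \<Rightarrow> int) \<Rightarrow> (('i \<Rightarrow> int) \<Rightarrow> ('i \<Rightarrow> int)) set" where
  "weyl A = range (word_elt A)"

definition weyl_length :: "('i \<Rightarrow> 'i \<Rightarrow> int) \<Rightarrow> (('i \<Rightarrow> int) \<Rightarrow> ('i \<Rightarrow> int)) \<Rightarrow> nat" where
  "weyl_length A w = (LEAST n. \<exists>xs. length xs = n \<and> word_elt A xs = w)"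

definition weyl_reflections :: "('i \<Rightarrow> 'i \<Rightarrow> int) \<Rightarrow> (('i \<Rightarrow> int) \<Rightarrow> ('i \<Rightarrow> int)) set" where
  "weyl_reflections A = {word_elt A xs \<circ> sref A i \<circ> word_elt A (rev xs) | xs i. True}"

definition bruhat_le :: "('i \<Rightarrow> 'i \<Rightarrow> int) \<Rightarrow> (('i \<Rightarrow> int) \<Rightarrow> ('i \<Rightarrow> int)) \<Rightarrow> (('i \<Rightarrow> int) \<Rightarrow> ('i \<Rightarrow> int)) \<Rightarrow> bool" where
  "bruhat_le A u w \<longleftrightarrow> u \<in> weyl A \<and>
     (\<lambda>x y. \<exists>t\<in>weyl_reflections A. y = t \<circ> x \<and> weyl_length A x < weyl_length A y)\<^sup>*\<^sup>* u w"

definition bruhat_less :: "('i \<Rightarrow> 'i \<Rightarrow> int) \<Rightarrow> (('i \<Rightarrow> int) \<Rightarrow> ('i \<Rightarrow> int)) \<Rightarrow> (('i \<Rightarrow> int) \<Rightarrow> ('i \<Rightarrow> int)) \<Rightarrow> bool" where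
  "bruhat_less A u w \<longleftrightarrow> bruhat_le A u w \<and> u \<noteq> w"

definition chamber_weights :: "('i \<Rightarrow> 'i \<Rightarrow> int) \<Rightarrow> ('i \<Rightarrow> int) set" where
  "chamber_weights A = {w (fund_weight i) | w i. w \<in> weyl A}"

definition weyl_minus :: "('i \<Rightarrow> 'i \<Rightarrow> int) \<Rightarrow> 'i \<Rightarrow> (('i \<Rightarrow> int) \<Rightarrow> ('i \<Rightarrow> int)) set" where
  "weyl_minus A j = {w \<in> weyl A. bruhat_less A (sref A j \<circ> w) w}"

definition Gamma_up :: "('i \<Rightarrow> 'i \<Rightarrow> int) \<Rightarrow> 'i \<Rightarrow> ('i \<Rightarrow> int) set" where
  "Gamma_up A j = {w (fund_weight i) | w i. w \<in> weyl_minus A j}"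

definition Gamma_low :: "('i \<Rightarrow> 'i \<Rightarrow> int) \<Rightarrow> 'i \<Rightarrow> ('i \<Rightarrow> int) set" where
  "Gamma_low A j = chamber_weights A - Gamma_up A j"

end

theory Submission
  imports Defs "HOL-Analysis.Analysis"
begin

text \<open>
  Write \<gamma> = w \<varpi>_i with w \<in> W. For each w the coordinates \<langle>h_j, w \<varpi>_a\<rangle>, a \<in> I, are either
  all \<ge> 0 or all \<le> 0, according as w\<inverse>\<alpha>_j is a positive or a negative root, and s_j w is
  shorter than w exactly when one of them is negative (exchange condition); as s_j is a
  reflection, this is also the Bruhat relation s_j w < w. Hence w \<in> W_j^- forces
  \<langle>h_j, \<gamma>\<rangle> \<le> 0. Conversely, if \<langle>h_j, \<gamma>\<rangle> < 0 then w \<in> W_j^-; if \<langle>h_j, \<gamma>\<rangle> = 0 then s_j fixes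
  \<gamma> = (s_j w) \<varpi>_i, and one of w, s_j w lies in W_j^-.

  The sign dichotomy is derived from the Cartan matrix alone: for dominant \<lambda>, \<lambda> - w\<lambda> is a
  nonnegative combination of simple roots. This follows from confluence of Mozes' numbers game,
  which terminates on the finite orbit W\<lambda> (finite by positive definiteness of the symmetrized
  Cartan matrix) and is locally confluent by the braid relations of rank 2.
\<close>

section \<open>Words acting on weights\<close>

lemma word_elt_Nil [simp]: "word_elt A [] = id"
  by (simp add: word_elt_def)

lemma word_elt_Cons [simp]: "word_elt A (i # xs) = sref A i \<circ> word_elt A xs"
  by (simp add: word_elt_def)

lemma word_elt_append: "word_elt A (xs @ ys) = word_elt A xs \<circ> word_elt A ys"
  by (induction xs) auto

lemma sref_involutive: "A i i = 2 \<Longrightarrow> sref A i (sref A i mu) = mu"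
  by (rule ext) (simp add: sref_def algebra_simps)

lemma word_elt_rev_left_inverse:
  "(\<And>i. A i i = 2) \<Longrightarrow> word_elt A (rev xs) (word_elt A xs mu) = mu"
  by (induction xs arbitrary: mu) (auto simp: word_elt_append sref_involutive)

lemma word_elt_rev_right_inverse:
  "(\<And>i. A i i = 2) \<Longrightarrow> word_elt A xs (word_elt A (rev xs) mu) = mu"
  using word_elt_rev_left_inverse[of A "rev xs" mu] by simp

lemma word_elt_affine:
  "word_elt A xs (\<lambda>k. x k + t * y k) = (\<lambda>k. word_elt A xs x k + t * word_elt A xs y k)"
  by (induction xs) (auto simp: sref_def algebra_simps)

lemma word_elt_zero: "word_elt A xs (\<lambda>_. 0) = (\<lambda>_. 0)"
  by (induction xs) (simp_all add: sref_def)

lemma word_elt_fund_expansion: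
  fixes A :: "'i::finite \<Rightarrow> 'i \<Rightarrow> int"
  shows "word_elt A xs mu k = (\<Sum>a\<in>UNIV. mu a * word_elt A xs (fund_weight a) k)"
proof (induction xs arbitrary: k)
  case Nil
  have "(\<Sum>a\<in>UNIV. mu a * fund_weight a k) = (\<Sum>a\<in>UNIV. if a = k then mu k else 0)"
    by (rule sum.cong) (auto simp: fund_weight_def)
  then show ?case by simp
next
  case (Cons i xs)
  show ?case
    by (simp add: sref_def Cons[of k] Cons[of i] sum_subtractf sum_distrib_left algebra_simps)
qed

section \<open>Cartan matrices of finite type\<close>

lemma cartan_simple_diag: "cartan_simple A \<Longrightarrow> A i i = 2"
  by (simp add: cartan_simple_def)

lemma cartan_simple_offdiag_nonpos: "cartan_simple A \<Longrightarrow> i \<noteq> j \<Longrightarrow> A i j \<le> 0"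
  by (simp add: cartan_simple_def)

lemma cartan_simple_zero_iff: "cartan_simple A \<Longrightarrow> A i j = 0 \<longleftrightarrow> A j i = 0"
  by (simp add: cartan_simple_def)

definition cartan_qform :: "('i::finite \<Rightarrow> real) \<Rightarrow> ('i \<Rightarrow> 'i \<Rightarrow> int) \<Rightarrow> ('i \<Rightarrow> real) \<Rightarrow> real" where
  "cartan_qform d A x = (\<Sum>i\<in>UNIV. \<Sum>j\<in>UNIV. x i * d i * of_int (A i j) * x j)"

lemma cartan_simple_symmetrizer:
  "cartan_simple A \<Longrightarrow> \<exists>d. (\<forall>i. d i > 0) \<and> (\<forall>i j. d i * of_int (A i j) = d j * of_int (A j i))
     \<and> (\<forall>x. x \<noteq> (\<lambda>_. 0) \<longrightarrow> cartan_qform d A x > 0)"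
  unfolding cartan_simple_def cartan_qform_def by blast

definition root_comb :: "('i::finite \<Rightarrow> 'i \<Rightarrow> int) \<Rightarrow> ('i \<Rightarrow> int) \<Rightarrow> ('i \<Rightarrow> int)" where
  "root_comb A c = (\<lambda>k. \<Sum>i\<in>UNIV. c i * simple_root A i k)"

lemma root_comb_apply: "root_comb A c k = (\<Sum>i\<in>UNIV. A k i * c i)"
  by (simp add: root_comb_def simple_root_def mult.commute)

lemma root_comb_lincomb:
  "root_comb A (\<lambda>i. s * c i + t * c' i) k = s * root_comb A c k + t * root_comb A c' k"
  by (simp add: root_comb_apply sum.distrib sum_distrib_left algebra_simps)

lemma root_comb_add: "root_comb A (\<lambda>i. c i + c' i) k = root_comb A c k + root_comb A c' k"
  using root_comb_lincomb[of A 1 c 1 c' k] by simp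

lemma root_comb_eq_zero:
  fixes A :: "'i::finite \<Rightarrow> 'i \<Rightarrow> int"
  assumes cs: "cartan_simple A" and zero: "root_comb A c = (\<lambda>_. 0)"
  shows "c = (\<lambda>_. 0)"
proof (rule ccontr)
  assume "c \<noteq> (\<lambda>_. 0)"
  obtain d where dsym: "\<forall>i j. d i * of_int (A i j) = d j * of_int (A j i)"
    and pd: "\<forall>x. x \<noteq> (\<lambda>_. 0) \<longrightarrow> cartan_qform d A x > 0"
    using cartan_simple_symmetrizer[OF cs] by blast
  define y where "y = (\<lambda>i. real_of_int (c i))"
  have "y \<noteq> (\<lambda>_. 0)"
    using \<open>c \<noteq> (\<lambda>_. 0)\<close> by (auto simp: y_def fun_eq_iff)
  then have "cartan_qform d A y > 0"
    using pd by blast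
  moreover have row: "(\<Sum>i\<in>UNIV. of_int (A j i) * y i) = 0" for j
  proof -
    have "(\<Sum>i\<in>UNIV. A j i * c i) = 0"
      using fun_cong[OF zero, of j] by (simp add: root_comb_apply)
    then show ?thesis
      unfolding y_def by (simp flip: of_int_mult of_int_sum)
  qed
  have "cartan_qform d A y = (\<Sum>i\<in>UNIV. \<Sum>j\<in>UNIV. y j * d j * of_int (A j i) * y i)"
    unfolding cartan_qform_def using dsym by (intro sum.cong refl) (metis mult.commute mult.left_commute)
  also have "\<dots> = (\<Sum>j\<in>UNIV. y j * d j * (\<Sum>i\<in>UNIV. of_int (A j i) * y i))"
    by (subst sum.swap) (simp add: sum_distrib_left mult.assoc)
  also have "\<dots> = 0"
    by (simp add: row)
  finally show False
    using \<open>cartan_qform d A y > 0\<close> by simp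
qed

definition pos_root_cone :: "('i::finite \<Rightarrow> 'i \<Rightarrow> int) \<Rightarrow> ('i \<Rightarrow> int) set" where
  "pos_root_cone A = {root_comb A c | c. \<forall>i. 0 \<le> c i}"

lemma pos_root_cone_pointed:
  fixes A :: "'i::finite \<Rightarrow> 'i \<Rightarrow> int"
  assumes cs: "cartan_simple A" and "0 < s" "0 < t"
    and "(\<lambda>k. s * x k) \<in> pos_root_cone A" "(\<lambda>k. - (t * x k)) \<in> pos_root_cone A"
  shows "x = (\<lambda>_. 0)"
proof -
  obtain c c' where c: "\<forall>i. 0 \<le> c i" "(\<lambda>k. s * x k) = root_comb A c"
    and c': "\<forall>i. 0 \<le> c' i" "(\<lambda>k. - (t * x k)) = root_comb A c'"
    using assms(4,5) unfolding pos_root_cone_def by blast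
  have "root_comb A (\<lambda>i. t * c i + s * c' i) = (\<lambda>_. 0)"
    unfolding root_comb_lincomb by (auto simp: fun_eq_iff c(2)[symmetric] c'(2)[symmetric] algebra_simps)
  then have "(\<lambda>i. t * c i + s * c' i) = (\<lambda>_. 0)"
    by (rule root_comb_eq_zero[OF cs])
  moreover have "0 \<le> t * c i" "0 \<le> s * c' i" for i
    using assms(2,3) c(1) c'(1) by simp_all
  ultimately have "c = (\<lambda>_. 0)"
    using \<open>0 < t\<close> by (auto simp: fun_eq_iff add_nonneg_eq_0_iff)
  then show ?thesis
    using c(2) \<open>0 < s\<close> by (auto simp: fun_eq_iff root_comb_apply)
qed

lemma sum_two_points:
  fixes f :: "'i::finite \<Rightarrow> 'a::semiring_0"
  shows "(\<Sum>j\<in>UNIV. f j * ((if j = i then a else 0) + (if j = k then b else 0))) = f i * a + f k * b"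
proof -
  have "(\<Sum>j\<in>UNIV. f j * ((if j = i then a else 0) + (if j = k then b else 0)))
      = (\<Sum>j\<in>UNIV. (if j = i then f i * a else 0) + (if j = k then f k * b else 0))"
    by (intro sum.cong) (auto simp: distrib_left)
  then show ?thesis
    by (simp add: sum.distrib)
qed

lemma cartan_qform_two_points:
  fixes A :: "'i::finite \<Rightarrow> 'i \<Rightarrow> int" and i k :: 'i and a b :: real
  defines "x \<equiv> \<lambda>l. (if l = i then a else 0) + (if l = k then b else 0)"
  shows "cartan_qform d A x = (d i * A i i * a + d i * A i k * b) * a + (d k * A k i * a + d k * A k k * b) * b"
proof -
  have row: "(\<Sum>j\<in>UNIV. x l * d l * of_int (A l j) * x j) = (d l * A l i * a + d l * A l k * b) * x l" for l
  proof -
    have "(\<Sum>j\<in>UNIV. x l * d l * of_int (A l j) * x j) = x l * d l * A l i * a + x l * d l * A l k * b"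
      unfolding x_def by (rule sum_two_points)
    then show ?thesis
      by (simp add: algebra_simps)
  qed
  show ?thesis
    unfolding cartan_qform_def row unfolding x_def by (rule sum_two_points)
qed

lemma cartan_simple_rank2_product:
  fixes A :: "'i::finite \<Rightarrow> 'i \<Rightarrow> int"
  assumes cs: "cartan_simple A" and "i \<noteq> k"
  shows "A i k * A k i < 4"
proof (rule ccontr)
  assume "\<not> A i k * A k i < 4"
  obtain d where dpos: "\<forall>i. d i > 0" and dsym: "\<forall>i j. d i * of_int (A i j) = d j * of_int (A j i)"
    and pd: "\<forall>x. x \<noteq> (\<lambda>_. 0) \<longrightarrow> cartan_qform d A x > 0"
    using cartan_simple_symmetrizer[OF cs] by blast
  define x :: "'i \<Rightarrow> real" where "x = (\<lambda>l. (if l = i then - of_int (A i k) else 0) + (if l = k then 2 else 0))"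
  have "x k = 2"
    using \<open>i \<noteq> k\<close> by (simp add: x_def)
  then have "cartan_qform d A x > 0"
    using pd by (metis zero_neq_numeral)
  also have "cartan_qform d A x = 2 * d k * (4 - of_int (A i k * A k i))"
  proof -
    have "d i * A i k * A i k = d k * A k i * A i k"
      using dsym by simp
    then show ?thesis
      unfolding x_def cartan_qform_two_points
      using cartan_simple_diag[OF cs, of i] cartan_simple_diag[OF cs, of k] by (simp add: algebra_simps)
  qed
  also have "\<dots> \<le> 0"
  proof -
    have "(4::real) \<le> of_int (A i k * A k i)"
      using \<open>\<not> A i k * A k i < 4\<close> by linarith
    then show ?thesis
      using dpos by (intro mult_nonneg_nonpos) (auto simp: less_imp_le)
  qed
  finally show False
    by simp
qed

text \<open>The off-diagonal pairs of finite type: A_1 \<times> A_1, A_2, B_2 = C_2 and G_2.\<close>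

lemma cartan_simple_rank2_cases:
  fixes A :: "'i::finite \<Rightarrow> 'i \<Rightarrow> int"
  assumes cs: "cartan_simple A" and "i \<noteq> k"
  shows "(A k i = 0 \<and> A i k = 0) \<or> (A k i = -1 \<and> A i k = -1) \<or> (A k i = -1 \<and> A i k = -2)
       \<or> (A k i = -2 \<and> A i k = -1) \<or> (A k i = -1 \<and> A i k = -3) \<or> (A k i = -3 \<and> A i k = -1)"
proof -
  have nonpos: "A k i \<le> 0" "A i k \<le> 0"
    using cartan_simple_offdiag_nonpos[OF cs] \<open>i \<noteq> k\<close> by auto
  have zero: "A k i = 0 \<longleftrightarrow> A i k = 0"
    by (rule cartan_simple_zero_iff[OF cs])
  have prod: "A k i * A i k < 4"
    using cartan_simple_rank2_product[OF cs \<open>i \<noteq> k\<close>] by (simp add: mult.commute)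
  have bound: "-3 \<le> P" if "P \<le> 0" "Q \<le> 0" "Q \<noteq> 0" "P * Q < 4" for P Q :: int
  proof (rule ccontr)
    assume "\<not> -3 \<le> P"
    then have "(-4) * Q \<le> P * Q"
      using that by (intro mult_right_mono_neg) auto
    then show False
      using that by linarith
  qed
  have "A k i \<in> {-3, -2, -1, 0}" "A i k \<in> {-3, -2, -1, 0}"
    using nonpos zero prod bound[of "A k i" "A i k"] bound[of "A i k" "A k i"]
    by (auto simp: mult.commute)
  then show ?thesis
    using zero prod by auto
qed

section \<open>Finiteness of orbits\<close>

lemma cartan_qform_scale: "cartan_qform d A (\<lambda>i. t * x i) = t\<^sup>2 * cartan_qform d A x"
  by (simp add: cartan_qform_def sum_distrib_left power2_eq_square algebra_simps)

lemma cartan_qform_coercive: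
  fixes A :: "'i::finite \<Rightarrow> 'i \<Rightarrow> int"
  assumes pd: "\<forall>x. x \<noteq> (\<lambda>_. 0) \<longrightarrow> cartan_qform d A x > 0"
  shows "\<exists>m>0. \<forall>x. cartan_qform d A x \<ge> m * (\<Sum>i\<in>UNIV. (x i)\<^sup>2)"
proof -
  define f where "f = (\<lambda>y::real^'i. cartan_qform d A (\<lambda>i. y $ i))"
  have cont: "continuous_on (sphere 0 1) f"
    unfolding f_def cartan_qform_def by (intro continuous_intros)
  obtain y0 where y0: "y0 \<in> sphere 0 1" "\<forall>y\<in>sphere 0 1. f y0 \<le> f y"
    using continuous_attains_inf[OF compact_sphere _ cont] by fastforce
  have "y0 \<noteq> 0"
    using y0(1) by auto
  then have "(\<lambda>i. y0 $ i) \<noteq> (\<lambda>_. 0)"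
    by (auto simp: vec_eq_iff fun_eq_iff)
  then have "f y0 > 0"
    using pd unfolding f_def by blast
  moreover have "cartan_qform d A x \<ge> f y0 * (\<Sum>i\<in>UNIV. (x i)\<^sup>2)" for x
  proof (cases "x = (\<lambda>_. 0)")
    case True
    then show ?thesis
      by (simp add: cartan_qform_def)
  next
    case False
    define v where "v = (\<chi> i. x i)"
    have norm_v: "(norm v)\<^sup>2 = (\<Sum>i\<in>UNIV. (x i)\<^sup>2)"
      unfolding v_def by (simp add: norm_vec_def L2_set_def sum_nonneg)
    have "v \<noteq> 0"
      using False unfolding v_def by (auto simp: vec_eq_iff fun_eq_iff)
    then have "norm v > 0"
      by simp
    then have "f y0 \<le> f (v /\<^sub>R norm v)"
      using y0(2) by simp
    also have "f (v /\<^sub>R norm v) = (1 / norm v)\<^sup>2 * cartan_qform d A x"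
    proof -
      have "(\<lambda>i. (v /\<^sub>R norm v) $ i) = (\<lambda>i. (1 / norm v) * x i)"
        by (simp add: v_def fun_eq_iff divide_inverse mult.commute)
      then show ?thesis
        unfolding f_def by (simp only: cartan_qform_scale)
    qed
    finally have "f y0 * (norm v)\<^sup>2 \<le> cartan_qform d A x"
      using \<open>norm v > 0\<close> by (simp add: field_simps power2_eq_square)
    then show ?thesis
      using norm_v by simp
  qed
  ultimately show ?thesis
    by blast
qed

lemma cartan_qform_update:
  fixes A :: "'i::finite \<Rightarrow> 'i \<Rightarrow> int"
  shows "cartan_qform d A (\<lambda>i. y i - (if i = x then t else 0)) =
    cartan_qform d A y - t * (\<Sum>j\<in>UNIV. d x * A x j * y j) - t * (\<Sum>i\<in>UNIV. y i * d i * A i x)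
      + t\<^sup>2 * d x * A x x"
proof -
  have row: "(\<Sum>i\<in>UNIV. \<Sum>j\<in>UNIV. if i = x then t * (d x * A x j * y j) else 0)
      = t * (\<Sum>j\<in>UNIV. d x * A x j * y j)"
    by (subst sum.swap) (simp add: sum_distrib_left)
  have diag: "(\<Sum>i\<in>UNIV. \<Sum>j\<in>UNIV. if i = x then if j = x then t\<^sup>2 * d x * A x x else 0 else 0) = t\<^sup>2 * d x * A x x"
    by (subst sum.swap) simp
  have "cartan_qform d A (\<lambda>i. y i - (if i = x then t else 0)) =
     (\<Sum>i\<in>UNIV. \<Sum>j\<in>UNIV. y i * d i * A i j * y j
        - (if i = x then t * (d x * A x j * y j) else 0)
        - (if j = x then t * (y i * d i * A i x) else 0)
        + (if i = x then if j = x then t\<^sup>2 * d x * A x x else 0 else 0))"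
    unfolding cartan_qform_def by (intro sum.cong refl) (auto simp: algebra_simps power2_eq_square)
  also have "\<dots> = cartan_qform d A y - t * (\<Sum>j\<in>UNIV. d x * A x j * y j)
      - t * (\<Sum>i\<in>UNIV. y i * d i * A i x) + t\<^sup>2 * d x * A x x"
    unfolding cartan_qform_def by (simp only: sum.distrib sum_subtractf row diag) (simp add: sum_distrib_left)
  finally show ?thesis .
qed

text \<open>For the invariant form with (\<alpha>_i, \<alpha>_j) = d_i A_ij, hence (\<varpi>_i, \<alpha>_j) = d_i \<delta>_ij,
  norm_sq_shift d A \<mu> y is |\<mu> + \<Sum>_i y_i \<alpha>_i|^2 - |\<mu>|^2; it vanishes along the orbit of \<mu>.\<close>

definition norm_sq_shift :: "('i::finite \<Rightarrow> real) \<Rightarrow> ('i \<Rightarrow> 'i \<Rightarrow> int) \<Rightarrow> ('i \<Rightarrow> int) \<Rightarrow> ('i \<Rightarrow> real) \<Rightarrow> real" where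
  "norm_sq_shift d A mu y = cartan_qform d A y + 2 * (\<Sum>i\<in>UNIV. y i * d i * mu i)"

lemma norm_sq_shift_reflection_invariant:
  fixes A :: "'i::finite \<Rightarrow> 'i \<Rightarrow> int" and y :: "'i \<Rightarrow> real" and t :: real
  assumes diag: "A x x = 2" and dsym: "\<forall>i j. d i * of_int (A i j) = d j * of_int (A j i)"
    and t: "(\<Sum>j\<in>UNIV. of_int (A x j) * y j) = t - mu x"
  shows "norm_sq_shift d A mu (\<lambda>i. y i - (if i = x then t else 0)) = norm_sq_shift d A mu y"
proof -
  have row: "(\<Sum>j\<in>UNIV. d x * A x j * y j) = d x * (t - mu x)"
    using t by (simp add: sum_distrib_left[symmetric] mult.assoc)
  have col: "(\<Sum>i\<in>UNIV. y i * d i * A i x) = d x * (t - mu x)"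
  proof -
    have "(\<Sum>i\<in>UNIV. y i * d i * A i x) = (\<Sum>i\<in>UNIV. d x * (A x i * y i))"
      using dsym by (intro sum.cong refl) (metis mult.commute mult.left_commute)
    then show ?thesis
      using t by (simp add: sum_distrib_left[symmetric])
  qed
  have lin: "(\<Sum>i\<in>UNIV. (y i - (if i = x then t else 0)) * d i * mu i)
      = (\<Sum>i\<in>UNIV. y i * d i * mu i) - t * d x * mu x"
  proof -
    have "(\<Sum>i\<in>UNIV. (y i - (if i = x then t else 0)) * d i * mu i)
        = (\<Sum>i\<in>UNIV. y i * d i * mu i - (if i = x then t * d x * mu x else 0))"
      by (intro sum.cong) (auto simp: algebra_simps)
    then show ?thesis
      by (simp add: sum_subtractf)
  qed
  show ?thesis
    unfolding norm_sq_shift_def cartan_qform_update row col lin using diag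
    by (simp add: algebra_simps power2_eq_square)
qed

lemma word_elt_root_coords:
  fixes A :: "'i::finite \<Rightarrow> 'i \<Rightarrow> int"
  assumes diag: "\<forall>i. A i i = 2" and dsym: "\<forall>i j. d i * of_int (A i j) = d j * of_int (A j i)"
  shows "\<exists>c. word_elt A xs mu = (\<lambda>k. mu k + root_comb A c k)
           \<and> norm_sq_shift d A mu (\<lambda>i. of_int (c i)) = 0"
proof (induction xs)
  case Nil
  show ?case
    by (intro exI[of _ "\<lambda>_. 0"]) (simp add: norm_sq_shift_def cartan_qform_def root_comb_apply)
next
  case (Cons x xs)
  then obtain c where c: "word_elt A xs mu = (\<lambda>k. mu k + root_comb A c k)"
    and shift: "norm_sq_shift d A mu (\<lambda>i. of_int (c i)) = 0"
    by blast
  define t where "t = word_elt A xs mu x"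
  define c' where "c' = (\<lambda>i. c i - (if i = x then t else 0))"
  have "root_comb A c' k = root_comb A c k - A k x * t" for k
    by (simp add: root_comb_apply c'_def right_diff_distrib sum_subtractf if_distrib[of "(*) _"])
  then have word: "word_elt A (x # xs) mu = (\<lambda>k. mu k + root_comb A c' k)"
    using c unfolding t_def by (simp add: sref_def fun_eq_iff algebra_simps)
  have "(\<Sum>j\<in>UNIV. of_int (A x j) * of_int (c j)) = real_of_int t - mu x"
    using fun_cong[OF c, of x] unfolding t_def root_comb_apply by (simp flip: of_int_mult of_int_sum)
  then have "norm_sq_shift d A mu (\<lambda>i. of_int (c i) - (if i = x then of_int t else 0)) = 0"
    using norm_sq_shift_reflection_invariant[OF _ dsym] diag shift by simp
  moreover have "(\<lambda>i. real_of_int (c' i)) = (\<lambda>i. of_int (c i) - (if i = x then of_int t else 0))"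
    by (simp add: c'_def fun_eq_iff)
  ultimately have "norm_sq_shift d A mu (\<lambda>i. of_int (c' i)) = 0"
    by simp
  with word show ?case
    by blast
qed

lemma abs_le_square_int: "\<bar>c::int\<bar> \<le> c\<^sup>2"
proof (cases "c = 0")
  case False
  then have "\<bar>c\<bar> * 1 \<le> \<bar>c\<bar> * \<bar>c\<bar>"
    by (intro mult_left_mono) auto
  then show ?thesis
    by (simp add: power2_eq_square abs_mult[symmetric])
qed simp

lemma neg_double_mult_le_weighted_squares:
  fixes m y e :: real
  assumes "m > 0"
  shows "-2 * (y * e) \<le> m/2 * y\<^sup>2 + 2/m * e\<^sup>2"
proof -
  have "0 \<le> (m * y + 2 * e)\<^sup>2 / (2 * m)"
    using assms by simp
  also have "\<dots> = m/2 * y\<^sup>2 + 2/m * e\<^sup>2 + 2 * (y * e)"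
    using assms by (simp add: field_simps power2_eq_square)
  finally show ?thesis
    by simp
qed

lemma norm_sq_shift_zero_bounded:
  fixes A :: "'i::finite \<Rightarrow> 'i \<Rightarrow> int"
  assumes pd: "\<forall>x. x \<noteq> (\<lambda>_. 0) \<longrightarrow> cartan_qform d A x > 0"
  shows "\<exists>B. \<forall>c. norm_sq_shift d A mu (\<lambda>i. of_int (c i)) = 0 \<longrightarrow> (\<forall>i. \<bar>c i\<bar> \<le> B)"
proof -
  obtain m where m: "m > 0" "\<forall>x. cartan_qform d A x \<ge> m * (\<Sum>i\<in>UNIV. (x i)\<^sup>2)"
    using cartan_qform_coercive[OF pd] by blast
  define e where "e = (\<lambda>i. d i * real_of_int (mu i))"
  define R where "R = 4 / m\<^sup>2 * (\<Sum>i\<in>UNIV. (e i)\<^sup>2)"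
  have "\<bar>c i\<bar> \<le> ceiling R" if shift: "norm_sq_shift d A mu (\<lambda>i. of_int (c i)) = 0" for c i
  proof -
    let ?y = "\<lambda>i. real_of_int (c i)"
    have "m * (\<Sum>i\<in>UNIV. (?y i)\<^sup>2) \<le> cartan_qform d A ?y"
      by (rule m(2)[rule_format])
    also have "\<dots> = (\<Sum>i\<in>UNIV. -2 * (?y i * e i))"
      using shift unfolding norm_sq_shift_def e_def by (simp add: sum_distrib_left mult.assoc sum_negf)
    also have "\<dots> \<le> (\<Sum>i\<in>UNIV. m/2 * (?y i)\<^sup>2 + 2/m * (e i)\<^sup>2)"
      by (intro sum_mono neg_double_mult_le_weighted_squares m(1))
    also have "\<dots> = m/2 * (\<Sum>i\<in>UNIV. (?y i)\<^sup>2) + 2/m * (\<Sum>i\<in>UNIV. (e i)\<^sup>2)"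
      by (simp add: sum.distrib sum_distrib_left)
    finally have "(\<Sum>i\<in>UNIV. (?y i)\<^sup>2) \<le> R"
      unfolding R_def using m(1) by (simp add: field_simps power2_eq_square)
    moreover have "(?y i)\<^sup>2 \<le> (\<Sum>i\<in>UNIV. (?y i)\<^sup>2)"
      by (rule member_le_sum) auto
    moreover have "real_of_int \<bar>c i\<bar> \<le> (?y i)\<^sup>2"
      using abs_le_square_int[of "c i"] by (simp flip: of_int_abs of_int_power)
    ultimately show ?thesis
      by linarith
  qed
  then show ?thesis
    by blast
qed

definition weight_orbit :: "('i \<Rightarrow> 'i \<Rightarrow> int) \<Rightarrow> ('i \<Rightarrow> int) \<Rightarrow> ('i \<Rightarrow> int) set" where
  "weight_orbit A mu = range (\<lambda>xs. word_elt A xs mu)"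

lemma finite_weight_orbit:
  fixes A :: "'i::finite \<Rightarrow> 'i \<Rightarrow> int"
  assumes cs: "cartan_simple A"
  shows "finite (weight_orbit A mu)"
proof -
  obtain d where dsym: "\<forall>i j. d i * of_int (A i j) = d j * of_int (A j i)"
    and pd: "\<forall>x. x \<noteq> (\<lambda>_. 0) \<longrightarrow> cartan_qform d A x > 0"
    using cartan_simple_symmetrizer[OF cs] by blast
  obtain B where B: "\<And>c i. norm_sq_shift d A mu (\<lambda>i. of_int (c i)) = 0 \<Longrightarrow> \<bar>c i\<bar> \<le> B"
    using norm_sq_shift_zero_bounded[OF pd] by blast
  have "weight_orbit A mu \<subseteq> (\<lambda>c k. mu k + root_comb A c k) ` PiE UNIV (\<lambda>_. {-B..B})"
  proof
    fix nu
    assume "nu \<in> weight_orbit A mu"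
    then obtain xs where "nu = word_elt A xs mu"
      unfolding weight_orbit_def by blast
    then obtain c where "nu = (\<lambda>k. mu k + root_comb A c k)" "norm_sq_shift d A mu (\<lambda>i. of_int (c i)) = 0"
      using word_elt_root_coords[OF _ dsym] cartan_simple_diag[OF cs] by blast
    moreover from this(2) have "c \<in> PiE UNIV (\<lambda>_. {-B..B})"
      using B[of c] by (auto simp: PiE_def Pi_def abs_le_iff minus_le_iff)
    ultimately show "nu \<in> (\<lambda>c k. mu k + root_comb A c k) ` PiE UNIV (\<lambda>_. {-B..B})"
      by blast
  qed
  then show ?thesis
    by (rule finite_subset) (intro finite_imageI finite_PiE; simp)
qed

section \<open>The numbers game\<close>

lemma newman_on:
  assumes closed: "\<And>a b. a \<in> S \<Longrightarrow> r a b \<Longrightarrow> b \<in> S"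
    and wf: "wf {(b, a). a \<in> S \<and> r a b}"
    and local_confluent: "\<And>a b c. a \<in> S \<Longrightarrow> r a b \<Longrightarrow> r a c \<Longrightarrow> \<exists>u. r\<^sup>*\<^sup>* b u \<and> r\<^sup>*\<^sup>* c u"
  shows "a \<in> S \<Longrightarrow> r\<^sup>*\<^sup>* a b \<Longrightarrow> r\<^sup>*\<^sup>* a c \<Longrightarrow> \<exists>u. r\<^sup>*\<^sup>* b u \<and> r\<^sup>*\<^sup>* c u"
proof (induction a arbitrary: b c rule: wf_induct_rule[OF wf])
  case (1 a)
  show ?case
  proof (cases "b = a \<or> c = a")
    case True
    then show ?thesis
      using "1.prems" by blast
  next
    case False
    then obtain b1 c1 where b1: "r a b1" "r\<^sup>*\<^sup>* b1 b" and c1: "r a c1" "r\<^sup>*\<^sup>* c1 c"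
      using "1.prems" by (metis converse_rtranclpE)
    obtain u0 where u0: "r\<^sup>*\<^sup>* b1 u0" "r\<^sup>*\<^sup>* c1 u0"
      using local_confluent[OF "1.prems"(1) b1(1) c1(1)] by blast
    have "b1 \<in> S" "c1 \<in> S"
      using closed "1.prems"(1) b1(1) c1(1) by blast+
    obtain u1 where u1: "r\<^sup>*\<^sup>* b u1" "r\<^sup>*\<^sup>* u0 u1"
      using "1.IH"[of b1] \<open>b1 \<in> S\<close> "1.prems"(1) b1 u0(1) by blast
    obtain u2 where "r\<^sup>*\<^sup>* c u2" "r\<^sup>*\<^sup>* u1 u2"
      using "1.IH"[of c1] \<open>c1 \<in> S\<close> "1.prems"(1) c1 rtranclp_trans[OF u0(2) u1(2)] by blast
    then show ?thesis
      using u1(1) by (meson rtranclp_trans)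
  qed
qed

text \<open>A move of Mozes' numbers game: reflecting at a negative coordinate \<mu>_i raises \<mu>
  by the positive multiple -\<mu>_i of \<alpha>_i.\<close>

definition fire :: "('i \<Rightarrow> 'i \<Rightarrow> int) \<Rightarrow> ('i \<Rightarrow> int) \<Rightarrow> ('i \<Rightarrow> int) \<Rightarrow> bool" where
  "fire A mu nu \<longleftrightarrow> (\<exists>i. mu i < 0 \<and> nu = sref A i mu)"

fun alternate_sref :: "('i \<Rightarrow> 'i \<Rightarrow> int) \<Rightarrow> 'i \<Rightarrow> 'i \<Rightarrow> nat \<Rightarrow> ('i \<Rightarrow> int) \<Rightarrow> ('i \<Rightarrow> int)" where
  "alternate_sref A i k 0 mu = mu"
| "alternate_sref A i k (Suc n) mu = alternate_sref A k i n (sref A i mu)"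

fun alternate_fires :: "('i \<Rightarrow> 'i \<Rightarrow> int) \<Rightarrow> 'i \<Rightarrow> 'i \<Rightarrow> nat \<Rightarrow> ('i \<Rightarrow> int) \<Rightarrow> bool" where
  "alternate_fires A i k 0 mu = True"
| "alternate_fires A i k (Suc n) mu = (mu i < 0 \<and> alternate_fires A k i n (sref A i mu))"

lemma alternate_fires_rtranclp:
  "alternate_fires A i k n mu \<Longrightarrow> (fire A)\<^sup>*\<^sup>* mu (alternate_sref A i k n mu)"
proof (induction n arbitrary: i k mu)
  case (Suc n)
  then have "fire A mu (sref A i mu)"
    by (auto simp: fire_def)
  with Suc show ?case
    by (auto intro: converse_rtranclp_into_rtranclp)
qed simp

text \<open>Local confluence reduces to rank 2: both alternating firing sequences are legal, and
  they meet by the braid relation of the dihedral group generated by s_i and s_k.\<close>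

lemma fire_braid_rank2:
  assumes "A i i = 2" "A k k = 2" "mu i < 0" "mu k < 0"
    and "(A k i = 0 \<and> A i k = 0) \<or> (A k i = -1 \<and> A i k = -1) \<or> (A k i = -1 \<and> A i k = -2)
       \<or> (A k i = -2 \<and> A i k = -1) \<or> (A k i = -1 \<and> A i k = -3) \<or> (A k i = -3 \<and> A i k = -1)"
  shows "\<exists>m>0. alternate_fires A i k m mu \<and> alternate_fires A k i m mu
        \<and> alternate_sref A i k m mu = alternate_sref A k i m mu"
proof -
  let ?braid = "\<lambda>m. alternate_fires A i k m mu \<and> alternate_fires A k i m mu
      \<and> alternate_sref A i k m mu = alternate_sref A k i m mu"
  note simps = numeral_eq_Suc sref_def algebra_simps fun_eq_iff
  have "?braid 2" if "A k i = 0" "A i k = 0"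
    using that assms(1-4) by (simp add: simps)
  moreover have "?braid 3" if "A k i = -1" "A i k = -1"
    using that assms(1-4) by (simp add: simps)
  moreover have "?braid 4" if "A k i = -1 \<and> A i k = -2 \<or> A k i = -2 \<and> A i k = -1"
    using that assms(1-4) by (elim disjE conjE) (simp_all add: simps)
  moreover have "?braid 6" if "A k i = -1 \<and> A i k = -3 \<or> A k i = -3 \<and> A i k = -1"
    using that assms(1-4) by (elim disjE conjE) (simp_all add: simps)
  ultimately show ?thesis
    using assms(5) zero_less_numeral by blast
qed

lemma fire_local_confluent:
  fixes A :: "'i::finite \<Rightarrow> 'i \<Rightarrow> int"
  assumes cs: "cartan_simple A" and "fire A mu b" "fire A mu c"
  shows "\<exists>u. (fire A)\<^sup>*\<^sup>* b u \<and> (fire A)\<^sup>*\<^sup>* c u"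
proof -
  obtain i k where ik: "mu i < 0" "b = sref A i mu" "mu k < 0" "c = sref A k mu"
    using assms(2,3) unfolding fire_def by blast
  show ?thesis
  proof (cases "i = k")
    case True
    then show ?thesis
      using ik by blast
  next
    case False
    then obtain m where "m > 0" "alternate_fires A i k m mu" "alternate_fires A k i m mu"
        "alternate_sref A i k m mu = alternate_sref A k i m mu"
      using fire_braid_rank2[of A i k mu, OF cartan_simple_diag[OF cs] cartan_simple_diag[OF cs] ik(1,3)]
        cartan_simple_rank2_cases[OF cs False] by blast
    then obtain n where "alternate_fires A i k (Suc n) mu" "alternate_fires A k i (Suc n) mu"
        "alternate_sref A i k (Suc n) mu = alternate_sref A k i (Suc n) mu"
      using gr0_conv_Suc by auto
    then show ?thesis
      using alternate_fires_rtranclp[of A k i n b] alternate_fires_rtranclp[of A i k n c] ik(2,4)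
      by auto
  qed
qed

lemma fire_raises:
  fixes A :: "'i::finite \<Rightarrow> 'i \<Rightarrow> int"
  assumes "fire A a b"
  shows "\<exists>c. (\<forall>i. 0 \<le> c i) \<and> c \<noteq> (\<lambda>_. 0) \<and> b - a = root_comb A c"
proof -
  obtain j where j: "a j < 0" "b = sref A j a"
    using assms unfolding fire_def by blast
  define c where "c = (\<lambda>i. if i = j then - a j else 0)"
  have "c \<noteq> (\<lambda>_. 0)" "\<forall>i. 0 \<le> c i"
    using j by (auto simp: c_def fun_eq_iff)
  moreover have "b - a = root_comb A c"
  proof
    fix k
    have "root_comb A c k = (\<Sum>i\<in>UNIV. if i = j then - (A k j * a j) else 0)"
      unfolding root_comb_apply c_def by (intro sum.cong) auto
    then show "(b - a) k = root_comb A c k"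
      using j by (simp add: sref_def)
  qed
  ultimately show ?thesis
    by blast
qed

lemma fire_rtranclp_raises:
  fixes A :: "'i::finite \<Rightarrow> 'i \<Rightarrow> int"
  assumes "(fire A)\<^sup>*\<^sup>* a b"
  shows "b - a \<in> pos_root_cone A"
  using assms
proof (induction rule: rtranclp_induct)
  case base
  have "a - a = root_comb A (\<lambda>_. 0)"
    by (simp add: fun_eq_iff root_comb_apply)
  then show ?case
    unfolding pos_root_cone_def by blast
next
  case (step b b')
  obtain c where c: "\<forall>i. 0 \<le> c i" "b - a = root_comb A c"
    using step.IH unfolding pos_root_cone_def by blast
  obtain c' where c': "\<forall>i. 0 \<le> c' i" "b' - b = root_comb A c'"
    using fire_raises[OF step.hyps(2)] by blast
  have "(b' - a) k = root_comb A c k + root_comb A c' k" for k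
    using fun_cong[OF c(2), of k] fun_cong[OF c'(2), of k] by simp
  then have "b' - a = root_comb A (\<lambda>i. c i + c' i)"
    by (simp add: fun_eq_iff root_comb_add)
  moreover have "\<forall>i. 0 \<le> c i + c' i"
    using c(1) c'(1) by simp
  ultimately show ?case
    unfolding pos_root_cone_def by blast
qed

lemma fire_tranclp_irrefl:
  fixes A :: "'i::finite \<Rightarrow> 'i \<Rightarrow> int"
  assumes cs: "cartan_simple A"
  shows "\<not> (fire A)\<^sup>+\<^sup>+ a a"
proof
  assume "(fire A)\<^sup>+\<^sup>+ a a"
  then obtain b where "fire A a b" "(fire A)\<^sup>*\<^sup>* b a"
    by (blast dest: tranclpD)
  obtain c where c: "\<forall>i. 0 \<le> c i" "c \<noteq> (\<lambda>_. 0)" "b - a = root_comb A c"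
    using fire_raises[OF \<open>fire A a b\<close>] by blast
  obtain c' where c': "\<forall>i. 0 \<le> c' i" "a - b = root_comb A c'"
    using fire_rtranclp_raises[OF \<open>(fire A)\<^sup>*\<^sup>* b a\<close>] unfolding pos_root_cone_def by blast
  have "root_comb A c k + root_comb A c' k = 0" for k
    using fun_cong[OF c(3), of k] fun_cong[OF c'(2), of k] by simp
  then have "root_comb A (\<lambda>i. c i + c' i) = (\<lambda>_. 0)"
    by (simp add: fun_eq_iff root_comb_add)
  then have "(\<lambda>i. c i + c' i) = (\<lambda>_. 0)"
    by (rule root_comb_eq_zero[OF cs])
  then have "c i = 0" for i
    using fun_cong[of _ _ i] c(1) c'(1) by (metis add_nonneg_eq_0_iff)
  then show False
    using c(2) by blast
qed

lemma weight_orbit_sref: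
  assumes "nu \<in> weight_orbit A mu"
  shows "sref A i nu \<in> weight_orbit A mu"
proof -
  obtain xs where "nu = word_elt A xs mu"
    using assms unfolding weight_orbit_def by blast
  then have "sref A i nu = word_elt A (i # xs) mu"
    by simp
  then show ?thesis
    unfolding weight_orbit_def by (rule range_eqI)
qed

lemma weight_orbit_fire:
  assumes "nu \<in> weight_orbit A mu" "fire A nu nu'"
  shows "nu' \<in> weight_orbit A mu"
  using assms(2) weight_orbit_sref[OF assms(1)] unfolding fire_def by auto

lemma wf_fire_on_weight_orbit:
  fixes A :: "'i::finite \<Rightarrow> 'i \<Rightarrow> int"
  assumes cs: "cartan_simple A"
  shows "wf {(b, a). a \<in> weight_orbit A mu \<and> fire A a b}"
    (is "wf ?R")
proof (rule finite_acyclic_wf)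
  have "?R \<subseteq> weight_orbit A mu \<times> weight_orbit A mu"
    using weight_orbit_fire by auto
  then show "finite ?R"
    using finite_weight_orbit[OF cs] finite_subset by blast
  have fires: "(fire A)\<^sup>+\<^sup>+ a b" if "(b, a) \<in> ?R\<^sup>+" for a b
    using that
  proof (induction rule: converse_trancl_induct)
    case (base b)
    then show ?case
      by auto
  next
    case (step b b')
    then have "(fire A)\<^sup>+\<^sup>+ a b'" "fire A b' b"
      by auto
    then show ?case
      by (metis tranclp.trancl_into_trancl)
  qed
  show "acyclic ?R"
  proof (rule acyclicI, intro allI)
    fix x
    show "(x, x) \<notin> ?R\<^sup>+"
      using fires[of x x] fire_tranclp_irrefl[OF cs, of x] by blast
  qed
qed

lemma fire_confluent_on_weight_orbit:
  fixes A :: "'i::finite \<Rightarrow> 'i \<Rightarrow> int"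
  assumes "cartan_simple A" "a \<in> weight_orbit A mu" "(fire A)\<^sup>*\<^sup>* a b" "(fire A)\<^sup>*\<^sup>* a c"
  shows "\<exists>u. (fire A)\<^sup>*\<^sup>* b u \<and> (fire A)\<^sup>*\<^sup>* c u"
proof (rule newman_on[where S = "weight_orbit A mu" and r = "fire A"])
  show "\<And>a b. a \<in> weight_orbit A mu \<Longrightarrow> fire A a b \<Longrightarrow> b \<in> weight_orbit A mu"
    by (rule weight_orbit_fire)
  show "wf {(b, a). a \<in> weight_orbit A mu \<and> fire A a b}"
    by (rule wf_fire_on_weight_orbit[OF assms(1)])
  show "\<And>a b c. fire A a b \<Longrightarrow> fire A a c \<Longrightarrow> \<exists>u. (fire A)\<^sup>*\<^sup>* b u \<and> (fire A)\<^sup>*\<^sup>* c u"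
    by (rule fire_local_confluent[OF assms(1)])
qed (use assms in auto)

lemma fire_joinable_word_elt:
  fixes A :: "'i::finite \<Rightarrow> 'i \<Rightarrow> int"
  assumes cs: "cartan_simple A"
  shows "\<exists>z. (fire A)\<^sup>*\<^sup>* mu z \<and> (fire A)\<^sup>*\<^sup>* (word_elt A xs mu) z"
proof (induction xs)
  case (Cons x xs)
  then obtain z where z: "(fire A)\<^sup>*\<^sup>* mu z" "(fire A)\<^sup>*\<^sup>* (word_elt A xs mu) z"
    by blast
  define nu where "nu = word_elt A xs mu"
  have "nu \<in> weight_orbit A mu"
    unfolding nu_def weight_orbit_def by (rule rangeI)
  consider "nu x < 0" | "nu x = 0" | "nu x > 0"
    by linarith
  then show ?case
  proof cases
    case 1
    then have "(fire A)\<^sup>*\<^sup>* nu (sref A x nu)"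
      unfolding fire_def by blast
    then obtain z' where "(fire A)\<^sup>*\<^sup>* z z'" "(fire A)\<^sup>*\<^sup>* (sref A x nu) z'"
      using fire_confluent_on_weight_orbit[OF cs \<open>nu \<in> weight_orbit A mu\<close> z(2)[folded nu_def]] by blast
    then show ?thesis
      using z(1) unfolding nu_def by (auto intro: rtranclp_trans)
  next
    case 2
    then have "sref A x nu = nu"
      by (simp add: sref_def)
    then show ?thesis
      using z unfolding nu_def by auto
  next
    case 3
    have "fire A (sref A x nu) nu"
      using 3 sref_involutive[of A x nu] cartan_simple_diag[OF cs, of x]
      unfolding fire_def by (intro exI[of _ x]) (auto simp: sref_def)
    then have "(fire A)\<^sup>*\<^sup>* (sref A x nu) z"
      using z(2) unfolding nu_def by (meson converse_rtranclp_into_rtranclp)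
    then show ?thesis
      using z(1) unfolding nu_def by auto
  qed
qed auto

text \<open>A dominant \<lambda> admits no move, so by joinability every w\<lambda> reaches \<lambda> by moves; as moves only
  add positive roots, w\<lambda> lies below \<lambda>.\<close>

lemma dominant_weight_dominates_orbit:
  fixes A :: "'i::finite \<Rightarrow> 'i \<Rightarrow> int"
  assumes cs: "cartan_simple A" and dominant: "\<forall>i. 0 \<le> lam i"
  shows "lam - word_elt A xs lam \<in> pos_root_cone A"
proof -
  define mu where "mu = word_elt A xs lam"
  have "lam = word_elt A (rev xs) mu"
    unfolding mu_def using word_elt_rev_left_inverse[of A xs lam] cartan_simple_diag[OF cs] by simp
  then obtain z where z: "(fire A)\<^sup>*\<^sup>* mu z" "(fire A)\<^sup>*\<^sup>* lam z"
    using fire_joinable_word_elt[OF cs, of mu "rev xs"] by auto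
  have "z = lam"
    using z(2) dominant by (metis converse_rtranclpE fire_def not_le)
  then show ?thesis
    using fire_rtranclp_raises[OF z(1)] unfolding mu_def by simp
qed

section \<open>The sign of w\<inverse>\<alpha>_j and the exchange condition\<close>

lemma word_elt_conj_sref:
  assumes diag: "\<And>i. A i i = 2"
  shows "word_elt A (rev ys @ j # ys) nu =
     (\<lambda>k. nu k - word_elt A ys nu j * word_elt A (rev ys) (simple_root A j) k)"
proof -
  have "word_elt A (rev ys @ j # ys) nu
      = word_elt A (rev ys) (\<lambda>k. word_elt A ys nu k + (- word_elt A ys nu j) * simple_root A j k)"
    by (simp add: word_elt_append sref_def simple_root_def)
  also have "\<dots> = (\<lambda>k. nu k + (- word_elt A ys nu j) * word_elt A (rev ys) (simple_root A j) k)"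
    by (simp only: word_elt_affine word_elt_rev_left_inverse[OF diag])
  finally show ?thesis
    by simp
qed

lemma word_elt_rev_simple_root_nonzero:
  assumes diag: "\<And>i. A i i = 2"
  shows "word_elt A (rev ys) (simple_root A j) \<noteq> (\<lambda>_. 0)"
proof
  assume "word_elt A (rev ys) (simple_root A j) = (\<lambda>_. 0)"
  then have "simple_root A j = word_elt A ys (\<lambda>_. 0)"
    using word_elt_rev_right_inverse[of A ys "simple_root A j", OF diag] by simp
  then have "simple_root A j = (\<lambda>_. 0)"
    by (simp add: word_elt_zero)
  then show False
    using diag[of j] by (simp add: simple_root_def fun_eq_iff)
qed

text \<open>With w = word_elt A ys and \<beta> = w\<inverse>\<alpha>_j, the reflection w\<inverse> s_j w moves \<varpi>_e
  by -\<langle>h_j, w \<varpi>_e\<rangle> \<beta>.\<close>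

lemma fund_coord_smult_root_in_cone:
  fixes A :: "'i::finite \<Rightarrow> 'i \<Rightarrow> int"
  assumes cs: "cartan_simple A"
  shows "(\<lambda>k. word_elt A ys (fund_weight e) j * word_elt A (rev ys) (simple_root A j) k) \<in> pos_root_cone A"
proof -
  have "fund_weight e - word_elt A (rev ys @ j # ys) (fund_weight e) \<in> pos_root_cone A"
    by (rule dominant_weight_dominates_orbit[OF cs]) (simp add: fund_weight_def)
  then show ?thesis
    by (simp add: word_elt_conj_sref cartan_simple_diag[OF cs] fun_diff_def)
qed

lemma word_elt_fund_sign_coherent:
  fixes A :: "'i::finite \<Rightarrow> 'i \<Rightarrow> int"
  assumes cs: "cartan_simple A"
  shows "(\<forall>a. 0 \<le> word_elt A ys (fund_weight a) j) \<or> (\<forall>a. word_elt A ys (fund_weight a) j \<le> 0)"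
proof (rule ccontr)
  assume "\<not> ?thesis"
  then obtain a b where ab: "word_elt A ys (fund_weight a) j < 0" "0 < word_elt A ys (fund_weight b) j"
    by (auto simp: not_le)
  have "word_elt A (rev ys) (simple_root A j) = (\<lambda>_. 0)"
    using pos_root_cone_pointed[OF cs ab(2), of "- word_elt A ys (fund_weight a) j"] ab(1)
      fund_coord_smult_root_in_cone[OF cs, of ys b j] fund_coord_smult_root_in_cone[OF cs, of ys a j]
    by simp
  then show False
    using word_elt_rev_simple_root_nonzero[of A ys j] cartan_simple_diag[OF cs] by blast
qed

lemma word_elt_fund_nonzero:
  fixes A :: "'i::finite \<Rightarrow> 'i \<Rightarrow> int"
  assumes diag: "\<And>i. A i i = 2"
  shows "\<exists>a. word_elt A ys (fund_weight a) j \<noteq> 0"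
proof (rule ccontr)
  assume "\<nexists>a. word_elt A ys (fund_weight a) j \<noteq> 0"
  then have "word_elt A ys mu j = 0" for mu
    by (simp add: word_elt_fund_expansion[of A ys mu j])
  moreover have "simple_root A j j = word_elt A ys (word_elt A (rev ys) (simple_root A j)) j"
    by (simp add: word_elt_rev_right_inverse diag)
  ultimately have "simple_root A j j = 0"
    by simp
  then show False
    using diag[of j] by (simp add: simple_root_def)
qed

lemma word_elt_transvection_trivial:
  fixes A :: "'i::finite \<Rightarrow> 'i \<Rightarrow> int"
  assumes cs: "cartan_simple A"
    and up: "\<And>nu. word_elt A xs nu = (\<lambda>k. nu k + nu i * ep k)"
    and down: "\<And>nu. word_elt A ys nu = (\<lambda>k. nu k - nu i * ep k)"
  shows "ep = (\<lambda>_. 0)"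
proof -
  have dominant: "\<forall>k. 0 \<le> fund_weight i k"
    by (simp add: fund_weight_def)
  have "(\<lambda>k. 1 * ep k) \<in> pos_root_cone A"
    using dominant_weight_dominates_orbit[OF cs dominant, of ys]
    by (simp add: down fun_diff_def fund_weight_def)
  moreover have "(\<lambda>k. - (1 * ep k)) \<in> pos_root_cone A"
    using dominant_weight_dominates_orbit[OF cs dominant, of xs]
    by (simp add: up fun_diff_def fund_weight_def)
  ultimately show ?thesis
    by (rule pos_root_cone_pointed[OF cs zero_less_one zero_less_one])
qed

lemma word_elt_coord_of_fund_support:
  fixes A :: "'i::finite \<Rightarrow> 'i \<Rightarrow> int"
  assumes supp: "\<And>a. a \<noteq> i \<Longrightarrow> word_elt A ys (fund_weight a) j = 0"
  shows "word_elt A ys nu j = nu i * word_elt A ys (fund_weight i) j"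
proof -
  have "word_elt A ys nu j = (\<Sum>a\<in>UNIV. if a = i then nu i * word_elt A ys (fund_weight i) j else 0)"
    unfolding word_elt_fund_expansion[of A ys nu j] using supp by (intro sum.cong) auto
  then show ?thesis
    by simp
qed

text \<open>If \<langle>h_j, w \<mu>\<rangle> depends on \<mu>_i alone, w\<inverse> s_j w is a reflection fixing every \<varpi>_a with a \<noteq> i;
  comparing the transvections (w\<inverse> s_j w) s_i and s_i (w\<inverse> s_j w) shows it is s_i.\<close>

lemma sref_comm_of_fund_support:
  fixes A :: "'i::finite \<Rightarrow> 'i \<Rightarrow> int"
  assumes cs: "cartan_simple A"
    and supp: "\<And>a. a \<noteq> i \<Longrightarrow> word_elt A ys (fund_weight a) j = 0"
  shows "sref A j \<circ> word_elt A ys = word_elt A ys \<circ> sref A i"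
proof -
  have diag: "\<And>i. A i i = 2"
    using cartan_simple_diag[OF cs] by blast
  define c0 where "c0 = word_elt A ys (fund_weight i) j"
  define beta where "beta = word_elt A (rev ys) (simple_root A j)"
  have lin: "word_elt A ys nu j = nu i * c0" for nu
    unfolding c0_def by (rule word_elt_coord_of_fund_support[OF supp])
  have conj: "word_elt A (rev ys @ j # ys) nu = (\<lambda>k. nu k - nu i * c0 * beta k)" for nu
    unfolding word_elt_conj_sref[OF diag] lin beta_def by simp
  have "word_elt A ys beta j = 2"
    unfolding beta_def using diag by (simp add: word_elt_rev_right_inverse simple_root_def)
  then have c0_beta_i: "c0 * (beta i * x) = 2 * x" for x
    using lin[of beta] by (simp add: mult.commute mult.left_commute)
  define ep where "ep = (\<lambda>k. c0 * beta k - A k i)"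
  have "word_elt A ((rev ys @ j # ys) @ [i]) nu = (\<lambda>k. nu k + nu i * ep k)" for nu
  proof -
    have "word_elt A ((rev ys @ j # ys) @ [i]) nu = word_elt A (rev ys @ j # ys) (sref A i nu)"
      unfolding word_elt_append[of A "rev ys @ j # ys" "[i]"] by simp
    then show ?thesis
      using diag[of i] by (simp add: conj ep_def sref_def algebra_simps)
  qed
  moreover have "word_elt A (i # rev ys @ j # ys) nu = (\<lambda>k. nu k - nu i * ep k)" for nu
    by (simp add: conj ep_def sref_def algebra_simps c0_beta_i)
  ultimately have "ep = (\<lambda>_. 0)"
    by (rule word_elt_transvection_trivial[OF cs])
  then have conj_eq: "word_elt A (rev ys @ j # ys) nu = sref A i nu" for nu
    by (simp add: conj ep_def sref_def fun_eq_iff mult.assoc)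
  have "word_elt A ys (sref A i nu) = sref A j (word_elt A ys nu)" for nu
    using conj_eq[of nu, symmetric] by (simp add: word_elt_append word_elt_rev_right_inverse diag)
  then show ?thesis
    by (simp add: fun_eq_iff)
qed

text \<open>The exchange step: the letter i at which the j-th fundamental coordinates first turn
  negative can be cancelled against s_j.\<close>

lemma sref_comp_word_elt_snoc:
  fixes A :: "'i::finite \<Rightarrow> 'i \<Rightarrow> int"
  assumes cs: "cartan_simple A"
    and nonneg: "\<forall>b. 0 \<le> word_elt A ys (fund_weight b) j"
    and neg: "word_elt A (ys @ [i]) (fund_weight a) j < 0"
  shows "sref A j \<circ> word_elt A (ys @ [i]) = word_elt A ys"
proof -
  have word: "word_elt A (ys @ [i]) = word_elt A ys \<circ> sref A i"
    by (simp add: word_elt_append)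
  have "sref A i (fund_weight b) = fund_weight b" if "b \<noteq> i" for b
    using that by (auto simp: sref_def fund_weight_def)
  then have fixed: "word_elt A (ys @ [i]) (fund_weight b) = word_elt A ys (fund_weight b)" if "b \<noteq> i" for b
    using that by (simp add: word)
  have "\<forall>b. word_elt A (ys @ [i]) (fund_weight b) j \<le> 0"
    using word_elt_fund_sign_coherent[OF cs, of "ys @ [i]" j] neg by (meson not_le)
  then have "word_elt A ys (fund_weight b) j = 0" if "b \<noteq> i" for b
    using nonneg fixed[OF that] by (metis order_antisym)
  then have "sref A j \<circ> word_elt A ys = word_elt A ys \<circ> sref A i"
    by (rule sref_comm_of_fund_support[OF cs])
  then show ?thesis
    by (simp add: word fun_eq_iff sref_involutive cartan_simple_diag[OF cs])
qed

lemma word_elt_deletion: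
  fixes A :: "'i::finite \<Rightarrow> 'i \<Rightarrow> int"
  assumes cs: "cartan_simple A"
  shows "word_elt A xs (fund_weight a) j < 0
    \<Longrightarrow> \<exists>zs. length zs < length xs \<and> word_elt A zs = sref A j \<circ> word_elt A xs"
proof (induction xs arbitrary: a rule: rev_induct)
  case Nil
  then show ?case
    by (simp add: fund_weight_def split: if_splits)
next
  case (snoc i ys)
  show ?case
  proof (cases "\<exists>b. word_elt A ys (fund_weight b) j < 0")
    case True
    then obtain zs where "length zs < length ys" "word_elt A zs = sref A j \<circ> word_elt A ys"
      using snoc.IH by blast
    then show ?thesis
      by (intro exI[of _ "zs @ [i]"]) (simp add: word_elt_append comp_assoc)
  next
    case False
    then have "sref A j \<circ> word_elt A (ys @ [i]) = word_elt A ys"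
      using sref_comp_word_elt_snoc[OF cs _ snoc.prems] by (simp add: not_less)
    then show ?thesis
      by (intro exI[of _ ys]) simp
  qed
qed

section \<open>Length, Bruhat order and chamber weights\<close>

lemma weyl_length_le_length: "word_elt A xs = w \<Longrightarrow> weyl_length A w \<le> length xs"
  unfolding weyl_length_def by (rule Least_le) blast

lemma weyl_length_reduced_word:
  assumes "w \<in> weyl A"
  shows "\<exists>xs. word_elt A xs = w \<and> length xs = weyl_length A w"
proof -
  have "\<exists>n xs. length xs = n \<and> word_elt A xs = w"
    using assms unfolding weyl_def by blast
  then have "\<exists>xs. length xs = (LEAST n. \<exists>xs. length xs = n \<and> word_elt A xs = w) \<and> word_elt A xs = w"
    by (rule LeastI_ex)
  then show ?thesis
    unfolding weyl_length_def by blast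
qed

lemma sref_comp_weyl:
  assumes "w \<in> weyl A"
  shows "sref A j \<circ> w \<in> weyl A"
proof -
  obtain ys where "w = word_elt A ys"
    using assms unfolding weyl_def by blast
  then have "sref A j \<circ> w = word_elt A (j # ys)"
    by simp
  then show ?thesis
    unfolding weyl_def by (rule range_eqI)
qed

lemma sref_comp_sref: "A j j = 2 \<Longrightarrow> sref A j \<circ> (sref A j \<circ> w) = w"
  by (simp add: fun_eq_iff sref_involutive)

lemma weyl_length_sref_less:
  fixes A :: "'i::finite \<Rightarrow> 'i \<Rightarrow> int"
  assumes cs: "cartan_simple A" and "w \<in> weyl A" and "w (fund_weight a) j < 0"
  shows "weyl_length A (sref A j \<circ> w) < weyl_length A w"
proof -
  obtain xs where xs: "word_elt A xs = w" "length xs = weyl_length A w"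
    using weyl_length_reduced_word[OF \<open>w \<in> weyl A\<close>] by blast
  then obtain zs where "length zs < length xs" "word_elt A zs = sref A j \<circ> w"
    using word_elt_deletion[OF cs] \<open>w (fund_weight a) j < 0\<close> by blast
  then show ?thesis
    using weyl_length_le_length[of A zs] xs(2) by fastforce
qed

lemma bruhat_le_imp_weyl_length_less:
  assumes "bruhat_le A u w"
  shows "u = w \<or> weyl_length A u < weyl_length A w"
proof -
  have "(\<lambda>x y. \<exists>t\<in>weyl_reflections A. y = t \<circ> x \<and> weyl_length A x < weyl_length A y)\<^sup>*\<^sup>* u w"
    using assms unfolding bruhat_le_def by blast
  then show ?thesis
    by (induction rule: rtranclp_induct) auto
qed

lemma weyl_minus_iff_weyl_length:
  fixes A :: "'i::finite \<Rightarrow> 'i \<Rightarrow> int"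
  assumes cs: "cartan_simple A" and w: "w \<in> weyl A"
  shows "w \<in> weyl_minus A j \<longleftrightarrow> weyl_length A (sref A j \<circ> w) < weyl_length A w"
proof
  assume "w \<in> weyl_minus A j"
  then show "weyl_length A (sref A j \<circ> w) < weyl_length A w"
    unfolding weyl_minus_def bruhat_less_def using bruhat_le_imp_weyl_length_less by blast
next
  assume shorter: "weyl_length A (sref A j \<circ> w) < weyl_length A w"
  have "sref A j \<in> weyl_reflections A"
    unfolding weyl_reflections_def by (auto intro!: exI[of _ "[]"])
  moreover have "w = sref A j \<circ> (sref A j \<circ> w)"
    by (simp add: sref_comp_sref cartan_simple_diag[OF cs])
  ultimately have "bruhat_le A (sref A j \<circ> w) w"
    unfolding bruhat_le_def using sref_comp_weyl[OF w] shorter by (auto intro!: r_into_rtranclp)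
  then show "w \<in> weyl_minus A j"
    unfolding weyl_minus_def bruhat_less_def using w shorter by auto
qed

lemma weyl_fund_coord_pos:
  fixes A :: "'i::finite \<Rightarrow> 'i \<Rightarrow> int"
  assumes cs: "cartan_simple A" and "w \<in> weyl A" and "\<forall>a. 0 \<le> w (fund_weight a) j"
  shows "\<exists>b. 0 < w (fund_weight b) j"
proof -
  obtain b where "w (fund_weight b) j \<noteq> 0"
    using assms(2) word_elt_fund_nonzero[of A, OF cartan_simple_diag[OF cs]] unfolding weyl_def by blast
  then show ?thesis
    using assms(3)[rule_format, of b] by (auto intro!: exI[of _ b])
qed

lemma weyl_minus_iff_neg_fund_coord:
  fixes A :: "'i::finite \<Rightarrow> 'i \<Rightarrow> int"
  assumes cs: "cartan_simple A" and w: "w \<in> weyl A"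
  shows "w \<in> weyl_minus A j \<longleftrightarrow> (\<exists>a. w (fund_weight a) j < 0)"
proof
  assume "w \<in> weyl_minus A j"
  show "\<exists>a. w (fund_weight a) j < 0"
  proof (rule ccontr)
    assume "\<nexists>a. w (fund_weight a) j < 0"
    then obtain b where "0 < w (fund_weight b) j"
      using weyl_fund_coord_pos[OF cs w] by (meson not_le)
    then have "(sref A j \<circ> w) (fund_weight b) j < 0"
      by (simp add: sref_def cartan_simple_diag[OF cs])
    then have "weyl_length A (sref A j \<circ> (sref A j \<circ> w)) < weyl_length A (sref A j \<circ> w)"
      by (rule weyl_length_sref_less[OF cs sref_comp_weyl[OF w]])
    then show False
      using \<open>w \<in> weyl_minus A j\<close> weyl_minus_iff_weyl_length[OF cs w]
      by (simp add: sref_comp_sref cartan_simple_diag[OF cs])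
  qed
next
  assume "\<exists>a. w (fund_weight a) j < 0"
  then show "w \<in> weyl_minus A j"
    using weyl_length_sref_less[OF cs w] weyl_minus_iff_weyl_length[OF cs w] by blast
qed

lemma weyl_fund_sign_coherent:
  fixes A :: "'i::finite \<Rightarrow> 'i \<Rightarrow> int"
  assumes "cartan_simple A" "w \<in> weyl A"
  shows "(\<forall>a. 0 \<le> w (fund_weight a) j) \<or> (\<forall>a. w (fund_weight a) j \<le> 0)"
  using assms word_elt_fund_sign_coherent unfolding weyl_def by blast

lemma Gamma_up_iff:
  fixes A :: "'i::finite \<Rightarrow> 'i \<Rightarrow> int"
  assumes cs: "cartan_simple A" and "\<gamma> \<in> chamber_weights A"
  shows "\<gamma> \<in> Gamma_up A j \<longleftrightarrow> \<gamma> j \<le> 0"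
proof
  assume "\<gamma> \<in> Gamma_up A j"
  then obtain w k where w: "w \<in> weyl_minus A j" "\<gamma> = w (fund_weight k)"
    unfolding Gamma_up_def by blast
  then have "w \<in> weyl A"
    unfolding weyl_minus_def by blast
  then show "\<gamma> j \<le> 0"
    using w weyl_minus_iff_neg_fund_coord[OF cs] weyl_fund_sign_coherent[OF cs] by (meson not_le)
next
  assume "\<gamma> j \<le> 0"
  obtain w i where w: "w \<in> weyl A" "\<gamma> = w (fund_weight i)"
    using assms(2) unfolding chamber_weights_def by blast
  show "\<gamma> \<in> Gamma_up A j"
  proof (cases "\<exists>a. w (fund_weight a) j < 0")
    case True
    then show ?thesis
      using w weyl_minus_iff_neg_fund_coord[OF cs] unfolding Gamma_up_def by blast
  next
    case False
    txt \<open>Then \<gamma> lies on the wall \<langle>h_j, \<gamma>\<rangle> = 0, so it is also (s_j w) \<varpi>_i with s_j w \<in> W_j^-.\<close>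
    have "0 \<le> \<gamma> j"
      using False w(2) by (simp add: not_less)
    then have "(sref A j \<circ> w) (fund_weight i) = \<gamma>"
      using \<open>\<gamma> j \<le> 0\<close> w(2) by (simp add: sref_def fun_eq_iff)
    moreover obtain b where "0 < w (fund_weight b) j"
      using False weyl_fund_coord_pos[OF cs w(1)] by (meson not_le)
    then have "(sref A j \<circ> w) (fund_weight b) j < 0"
      by (simp add: sref_def cartan_simple_diag[OF cs])
    then have "sref A j \<circ> w \<in> weyl_minus A j"
      using weyl_minus_iff_neg_fund_coord[OF cs sref_comp_weyl[OF w(1)]] by blast
    ultimately show ?thesis
      unfolding Gamma_up_def by blast
  qed
qed

theorem lemma3p8:
  fixes A :: "'i::finite \<Rightarrow> 'i \<Rightarrow> int" and j :: 'i and \<gamma> :: "'i \<Rightarrow> int"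
  assumes "cartan_simple A"
    and "\<gamma> \<in> chamber_weights A"
  shows "(\<gamma> \<in> Gamma_up A j \<longleftrightarrow> \<gamma> j \<le> 0) \<and> (\<gamma> \<in> Gamma_low A j \<longleftrightarrow> \<gamma> j > 0)"
  using Gamma_up_iff[OF assms] assms(2) by (simp add: Gamma_low_def not_le)

end
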